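(* Let $A,B \in\mathbb{C}^{n\times n}$. If $A\leq^{GD1}B$, then $A\leq^{D,-}B$.
   Context: For $A\in\mathbb{C}^{n\times n}$, $ind(A)$ is the smallest nonnegative integer $k$ with $\mathrm{rank}(A^k)=\mathrm{rank}(A^{k+1})$. $A\{1\}$ is the set of matrices $X$ with $AXA=A$. With $k=ind(A)$, $A\{GD\}$ is the set of matrices $X$ with $AXA=A$, $XA^{k+1}=A^k$, $A^{k+1}X=A^k$ (G-Drazin inverses). The Drazin inverse $A^D$ is the unique $X$ with $XAX=X$, $XA=AX$, $XA^{k+1}=A^k$. A GD1 inverse of $A$ is a matrix $A^{GD1}=A^{GD}AA^-$ with $A^-\in A\{1\}$, $A^{GD}\in A\{GD\}$. We write $A\leq^{GD1}B$ if $AA^{GD1}=BA^{GD1}$ and $A^{GD1}A=A^{GD1}B$ for some GD1 inverse $A^{GD1}$ of $A$. For $A^-\in A\{1\}$, the D1 inverse is $A^{D,-}=A^DAA^-$; we write $A\leq^{D,-}B$ if $A^{D,-}A=A^{D,-}B$ and $AA^{D,-}=BA^{D,-}$ for some D1 inverse $A^{D,-}$ of $A$ (i.e. for some $A^-\in A\{1\}$). *)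

theory Defs
  imports "HOL-Analysis.Analysis"
begin

type_synonym 'n cmat = "complex ^'n^'n"

primrec mpow :: "'n::finite cmat \<Rightarrow> nat \<Rightarrow> 'n cmat" where
  "mpow A 0 = mat 1"
| "mpow A (Suc k) = A ** mpow A k"

definition ind :: "'n::finite cmat \<Rightarrow> nat" where
  "ind A = (LEAST k. rank (mpow A k) = rank (mpow A (Suc k)))"

definition inner_inv :: "'n::finite cmat \<Rightarrow> 'n cmat set" where
  "inner_inv A = {X. A ** X ** A = A}"

definition gd_inv :: "'n::finite cmat \<Rightarrow> 'n cmat set" where
  "gd_inv A = {X. A ** X ** A = A \<and> X ** mpow A (Suc (ind A)) = mpow A (ind A)
                 \<and> mpow A (Suc (ind A)) ** X = mpow A (ind A)}"

definition drazin :: "'n::finite cmat \<Rightarrow> 'n cmat" where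
  "drazin A = (THE X. X ** A ** X = X \<and> X ** A = A ** X
                      \<and> X ** mpow A (Suc (ind A)) = mpow A (ind A))"

definition gd1_inv :: "'n::finite cmat \<Rightarrow> 'n cmat set" where
  "gd1_inv A = {G ** A ** M | G M. G \<in> gd_inv A \<and> M \<in> inner_inv A}"

definition gd1_le :: "'n::finite cmat \<Rightarrow> 'n cmat \<Rightarrow> bool" where
  "gd1_le A B \<longleftrightarrow> (\<exists>X \<in> gd1_inv A. A ** X = B ** X \<and> X ** A = X ** B)"

definition d1_inv :: "'n::finite cmat \<Rightarrow> 'n cmat set" where
  "d1_inv A = {drazin A ** A ** M | M. M \<in> inner_inv A}"

definition d1_le :: "'n::finite cmat \<Rightarrow> 'n cmat \<Rightarrow> bool" where
  "d1_le A B \<longleftrightarrow> (\<exists>X \<in> d1_inv A. X ** A = X ** B \<and> A ** X = B ** X)"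

end

theory Submission
  imports Defs
begin

(* Let G be a G-Drazin inverse of A and k = ind A. Then A^k G^(k+1) satisfies the Drazin
   equations, so the Drazin inverse D of A exists; writing D = D^(k+1) A^k = A^k D^(k+1) shows
   that D absorbs G on either side: D A G = D = G A D. If X = G A M (with A M A = A) witnesses
   A \<le>GD1 B, then Y = D A M is a D1 inverse, and since Y A = D A = D A X A and
   A D = A X A D, the equations X A = X B and A X = B X pass to Y. *)

definition is_drazin_inv :: "'n::finite cmat \<Rightarrow> nat \<Rightarrow> 'n cmat \<Rightarrow> bool" where
  "is_drazin_inv A k X \<longleftrightarrow>
     X ** A ** X = X \<and> X ** A = A ** X \<and> X ** mpow A (Suc k) = mpow A k"

lemma drazin_eq_The_is_drazin_inv: "drazin A = (THE X. is_drazin_inv A (ind A) X)"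
  unfolding drazin_def is_drazin_inv_def ..

lemma mpow_add: "mpow A (m + n) = mpow A m ** mpow A n"
  by (induction m) (simp_all add: matrix_mul_assoc)

lemma mpow_Suc_right: "mpow A (Suc n) = mpow A n ** A"
  using mpow_add[of A n 1] by simp

lemma mpow_commute:
  assumes "X ** A = A ** X"
  shows "X ** mpow A n = mpow A n ** X"
proof (induction n)
  case (Suc n)
  have "X ** mpow A (Suc n) = A ** (X ** mpow A n)"
    using assms by (simp add: matrix_mul_assoc)
  with Suc show ?case by (simp add: matrix_mul_assoc)
qed simp

lemma mpow_commute_mpow:
  assumes "X ** A = A ** X"
  shows "mpow X m ** mpow A n = mpow A n ** mpow X m"
  using mpow_commute[of "mpow A n" X m] mpow_commute[OF assms, of n] by simp

lemma commuting_outer_inv_eq_mpow: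
  assumes XAX: "X ** A ** X = X" and comm: "X ** A = A ** X"
  shows "mpow X (Suc j) ** mpow A j = X" and "mpow A j ** mpow X (Suc j) = X"
proof -
  show "mpow X (Suc j) ** mpow A j = X"
  proof (induction j)
    case (Suc j)
    have "mpow X (Suc (Suc j)) ** mpow A (Suc j) = X ** (mpow X (Suc j) ** mpow A j) ** A"
      by (simp only: mpow.simps(2)[of X "Suc j"] mpow_Suc_right[of A j] matrix_mul_assoc)
    also have "\<dots> = X ** (A ** X)"
      unfolding Suc.IH comm[symmetric] by (simp only: matrix_mul_assoc)
    also have "\<dots> = X" using XAX by (simp only: matrix_mul_assoc)
    finally show ?case .
  qed simp
  then show "mpow A j ** mpow X (Suc j) = X"
    using mpow_commute_mpow[OF comm] by metis
qed

lemma mpow_reduce_left: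
  assumes "G ** mpow A (Suc k) = mpow A k"
  shows "mpow G j ** mpow A (k + j) = mpow A k"
proof (induction j)
  case (Suc j)
  have "mpow G (Suc j) ** mpow A (k + Suc j) = mpow G j ** (G ** mpow A (Suc k)) ** mpow A j"
    using mpow_add[of A "Suc k" j] mpow_Suc_right[of G j] by (simp add: matrix_mul_assoc)
  also have "\<dots> = mpow G j ** mpow A (k + j)"
    by (simp only: assms mpow_add matrix_mul_assoc)
  finally show ?case using Suc.IH by simp
qed simp

lemma mpow_reduce_right:
  assumes "mpow A (Suc k) ** G = mpow A k"
  shows "mpow A (k + j) ** mpow G j = mpow A k"
proof (induction j)
  case (Suc j)
  have "mpow A (k + Suc j) ** mpow G (Suc j) = mpow A j ** (mpow A (Suc k) ** G) ** mpow G j"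
    using mpow_add[of A j "Suc k"] by (simp add: matrix_mul_assoc add.commute)
  also have "\<dots> = mpow A (k + j) ** mpow G j"
    by (simp only: assms mpow_add[of A j k] add.commute matrix_mul_assoc)
  finally show ?case using Suc.IH by simp
qed simp

lemma is_drazin_inv_unique:
  assumes X: "is_drazin_inv A k X" and Y: "is_drazin_inv A k Y"
  shows "X = Y"
proof -
  have XAX: "X ** A ** X = X" and XA: "X ** A = A ** X" and XAk: "X ** mpow A (Suc k) = mpow A k"
    using X unfolding is_drazin_inv_def by auto
  have YAY: "Y ** A ** Y = Y" and YA: "Y ** A = A ** Y" and YAk: "Y ** mpow A (Suc k) = mpow A k"
    using Y unfolding is_drazin_inv_def by auto
  have X_pow: "mpow A k ** mpow X (Suc k) = X" by (rule commuting_outer_inv_eq_mpow(2)[OF XAX XA])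
  have Y_pow: "mpow Y (Suc k) ** mpow A k = Y" by (rule commuting_outer_inv_eq_mpow(1)[OF YAY YA])
  have "X = Y ** mpow A (Suc k) ** mpow X (Suc k)"
    by (simp only: YAk X_pow)
  also have "\<dots> = Y ** A ** X"
    by (simp only: mpow.simps(2)[of A k] matrix_mul_assoc[symmetric] X_pow)
  finally have X_eq: "X = Y ** A ** X" .
  have AkX: "mpow A (Suc k) ** X = mpow A k"
    using mpow_commute[OF XA, of "Suc k"] XAk by simp
  have "Y = mpow Y (Suc k) ** mpow A (Suc k) ** X"
    by (simp only: AkX Y_pow matrix_mul_assoc[symmetric])
  also have "\<dots> = Y ** A ** X"
    by (simp only: mpow_Suc_right[of A k] matrix_mul_assoc Y_pow)
  finally have "Y = Y ** A ** X" .
  with X_eq show ?thesis by simp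
qed

lemma is_drazin_inv_from_gd_equations:
  assumes left: "G ** mpow A (Suc k) = mpow A k" and right: "mpow A (Suc k) ** G = mpow A k"
  shows "is_drazin_inv A k (mpow A k ** mpow G (Suc k))"
proof -
  define D where "D = mpow A k ** mpow G (Suc k)"
  note L = mpow_reduce_left[OF left] and R = mpow_reduce_right[OF right]
  have D_alt: "D = mpow G (Suc k) ** mpow A k"
  proof -
    have "D = mpow G (Suc k) ** mpow A (k + Suc k) ** mpow G (Suc k)"
      unfolding D_def using L[of "Suc k"] by simp
    also have "\<dots> = mpow G (Suc k) ** mpow A k"
      by (simp only: R[of "Suc k"] matrix_mul_assoc[symmetric])
    finally show ?thesis .
  qed
  have "D ** A = mpow G k ** (G ** mpow A (Suc k))"
    unfolding D_alt by (simp only: mpow_Suc_right[of G k] mpow_Suc_right[of A k] matrix_mul_assoc)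
  then have DA: "D ** A = mpow G k ** mpow A k"
    by (simp only: left)
  have AD: "A ** D = mpow A k ** mpow G k"
    using right unfolding D_def by (simp add: matrix_mul_assoc)
  have "mpow G k ** mpow A k = mpow G k ** (mpow A (k + k) ** mpow G k)" using R[of k] by simp
  also have "\<dots> = mpow A k ** mpow G k" using L[of k] by (simp add: matrix_mul_assoc)
  finally have "D ** A = A ** D" using DA AD by simp
  moreover have "D ** mpow A (Suc k) = mpow A k"
    unfolding D_alt by (simp only: matrix_mul_assoc[symmetric] mpow_add[symmetric] L)
  moreover have "D ** A ** D = D"
  proof -
    have "D ** A ** D = mpow G k ** mpow A k ** (mpow A k ** mpow G (Suc k))"
      unfolding DA by (simp only: D_def)
    also have "\<dots> = mpow G k ** mpow A (k + k) ** mpow G (Suc k)"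
      by (simp only: mpow_add matrix_mul_assoc)
    finally show ?thesis by (simp only: L D_def)
  qed
  ultimately show ?thesis unfolding is_drazin_inv_def D_def by blast
qed

lemma is_drazin_inv_drazin:
  assumes "G \<in> gd_inv A"
  shows "is_drazin_inv A (ind A) (drazin A)"
proof -
  have D: "is_drazin_inv A (ind A) (mpow A (ind A) ** mpow G (Suc (ind A)))"
    using assms unfolding gd_inv_def by (intro is_drazin_inv_from_gd_equations) auto
  show ?thesis
    unfolding drazin_eq_The_is_drazin_inv by (rule theI[where P = "is_drazin_inv A (ind A)", OF D]) (rule is_drazin_inv_unique[OF _ D])
qed

lemma is_drazin_inv_absorbs_gd:
  assumes D: "is_drazin_inv A k D"
    and left: "G ** mpow A (Suc k) = mpow A k" and right: "mpow A (Suc k) ** G = mpow A k"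
  shows "D ** A ** G = D" and "G ** A ** D = D"
proof -
  have DAD: "D ** A ** D = D" and DA: "D ** A = A ** D" using D unfolding is_drazin_inv_def by auto
  have D_left: "D = mpow D (Suc k) ** mpow A k"
    by (rule commuting_outer_inv_eq_mpow(1)[OF DAD DA, symmetric])
  have D_right: "D = mpow A k ** mpow D (Suc k)"
    by (rule commuting_outer_inv_eq_mpow(2)[OF DAD DA, symmetric])
  have "D ** A ** G = mpow D (Suc k) ** (mpow A (Suc k) ** G)"
    by (subst D_left) (simp only: mpow_Suc_right[of A k] matrix_mul_assoc)
  then show "D ** A ** G = D" using right D_left by simp
  have "G ** A ** D = G ** mpow A (Suc k) ** mpow D (Suc k)"
    by (subst D_right) (simp add: matrix_mul_assoc)
  then show "G ** A ** D = D" using left D_right by (simp add: matrix_mul_assoc)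
qed

lemma gd1_witness_to_d1_witness:
  fixes A B D G M :: "'a::semiring_1 ^'n^'n"
  assumes AGA: "A ** G ** A = A" and AMA: "A ** M ** A = A"
    and DAG: "D ** A ** G = D" and GAD: "G ** A ** D = D"
    and left: "A ** (G ** A ** M) = B ** (G ** A ** M)"
    and right: "(G ** A ** M) ** A = (G ** A ** M) ** B"
  shows "(D ** A ** M) ** A = (D ** A ** M) ** B" and "A ** (D ** A ** M) = B ** (D ** A ** M)"
proof -
  have "(D ** A ** M) ** A = D ** A" using AMA by (metis matrix_mul_assoc)
  also have "\<dots> = D ** A ** ((G ** A ** M) ** A)"
    using DAG AMA by (metis matrix_mul_assoc)
  also have "\<dots> = D ** A ** ((G ** A ** M) ** B)" using right by simp
  also have "\<dots> = (D ** A ** M) ** B" using DAG by (simp add: matrix_mul_assoc)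
  finally show "(D ** A ** M) ** A = (D ** A ** M) ** B" .
  have "A ** D = A ** (G ** A ** M) ** A ** D"
    using AGA AMA by (metis matrix_mul_assoc)
  also have "\<dots> = B ** (G ** A ** M) ** A ** D"
    by (simp only: left)
  also have "\<dots> = B ** (G ** (A ** M ** A) ** D)"
    by (simp only: matrix_mul_assoc)
  finally have "A ** D = B ** D"
    using AMA GAD by simp
  then show "A ** (D ** A ** M) = B ** (D ** A ** M)" by (simp add: matrix_mul_assoc)
qed

theorem proposition2p12:
  fixes A B :: "complex ^'n^'n"
  assumes "gd1_le A B"
  shows "d1_le A B"
proof -
  obtain G M where G: "G \<in> gd_inv A" and M: "M \<in> inner_inv A"
    and left: "A ** (G ** A ** M) = B ** (G ** A ** M)"
    and right: "(G ** A ** M) ** A = (G ** A ** M) ** B"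
    using assms unfolding gd1_le_def gd1_inv_def by blast
  have AGA: "A ** G ** A = A" and gd_left: "G ** mpow A (Suc (ind A)) = mpow A (ind A)"
    and gd_right: "mpow A (Suc (ind A)) ** G = mpow A (ind A)"
    using G unfolding gd_inv_def by auto
  have AMA: "A ** M ** A = A" using M unfolding inner_inv_def by simp
  note absorb = is_drazin_inv_absorbs_gd[OF is_drazin_inv_drazin[OF G] gd_left gd_right]
  have "drazin A ** A ** M \<in> d1_inv A" using M unfolding d1_inv_def by blast
  with gd1_witness_to_d1_witness[OF AGA AMA absorb left right] show ?thesis
    unfolding d1_le_def by blast
qed

end
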